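(* Let $m$ be a stack $\mathbb T$-automaton over a finite stack alphabet $\Gamma$ and finite input alphabet $A$, with finite state set $X$. Then for every $x_0\in X$ and $\gamma_0\in\Gamma$ the language $\{w\in A^*\mid \llbracket x_0\rrbracket_m(w)(\gamma_0)=1\}$ is a real-time deterministic context-free language. Conversely, for every real-time deterministic context-free language $\mathcal L\subseteq A^*$ there exist a stack $\mathbb T$-automaton $m$ (over some finite $\Gamma$), a state $x_0$ and a symbol $\gamma_0\in\Gamma$ such that $\mathcal L=\{w\in A^*\mid \llbracket x_0\rrbracket_m(w)(\gamma_0)=1\}$.
   Context: The stack monad over $\Gamma$: $TX$ is the set of maps $p=\langle r,t\rangle:\Gamma^*\to X\times\Gamma^*$ for which there is $k$ such that $r(wu)=r(w)$ and $t(wu)=t(w)u$ for all $w\in\Gamma^k$, $u\in\Gamma^*$; unit $\eta(x)(s)=(x,s)$; Kleisli extension $f^\dagger(p)(s)=f(r(s))(t(s))$. A stack $\mathbb T$-automaton consists of a finite set $X$ and maps $o^m:X\to B$, $t^m:A\times X\to TX$, where $B$ is the set of predicates $p\in 2^{\Gamma^*}$ for which there is $k$ with $p(wu)=p(w)$ whenever $|w|\ge k$, with the $\mathbb T$-algebra structure $a^m:TB\to B$, $a^m(\langle r,t\rangle)(s)=r(s)(t(s))$. Its trace semantics $\llbracket x\rrbracket_m:A^*\to B$ is given by the generalized powerset construction: equip $B\times(TX)^A$ with the componentwise $\mathbb T$-algebra structure, let $m^\sharp:TX\to B\times(TX)^A$ be the unique $\mathbb T$-algebra morphism with $m^\sharp(\eta(x))=(o^m(x),\lambda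 a.t^m(a,x))$, and let $\llbracket x\rrbracket_m(w)=o(\partial_w(\eta(x)))$ in this coalgebra ($\partial_\epsilon=\mathrm{id}$, $\partial_{aw}=\partial_w\circ\partial_a$). Equivalently $\llbracket x\rrbracket_m(\epsilon)=o^m(x)$ and $\llbracket x\rrbracket_m(au)(s)=\llbracket y\rrbracket_m(u)(s')$ where $(y,s')=t^m(a,x)(s)$. A real-time deterministic context-free language is a language accepted (by final state) by a deterministic pushdown automaton without $\epsilon$-transitions, i.e. one with transition function $\delta:Q\times A\times\Delta\to (Q\times\Delta^* )\cup\{\bot\}$ (finite $Q,\Delta$), an initial state, an initial stack symbol and a set of final states. *)

theory Defs
  imports Main
begin

definition inT :: "'x set \<Rightarrow> 'g set \<Rightarrow> ('g list \<Rightarrow> 'x \<times> 'g list) \<Rightarrow> bool" where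
  "inT X G p \<longleftrightarrow>
     (\<forall>s\<in>lists G. fst (p s) \<in> X \<and> snd (p s) \<in> lists G) \<and>
     (\<exists>k. \<forall>w\<in>lists G. \<forall>u\<in>lists G. length w = k \<longrightarrow>
            fst (p (w @ u)) = fst (p w) \<and> snd (p (w @ u)) = snd (p w) @ u)"

definition inB :: "'g set \<Rightarrow> ('g list \<Rightarrow> bool) \<Rightarrow> bool" where
  "inB G p \<longleftrightarrow> (\<exists>k. \<forall>w\<in>lists G. \<forall>u\<in>lists G. length w \<ge> k \<longrightarrow> p (w @ u) = p w)"

text \<open>A stack T-automaton: output o :: X \<Rightarrow> B and transition t :: A \<times> X \<Rightarrow> TX
  (input alphabet is the finite type 'a).\<close>
definition stack_aut ::
  "'x set \<Rightarrow> 'g set \<Rightarrow> ('x \<Rightarrow> 'g list \<Rightarrow> bool) \<Rightarrow> ('a \<Rightarrow> 'x \<Rightarrow> 'g list \<Rightarrow> 'x \<times> 'g list) \<Rightarrow> bool" where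
  "stack_aut X G om tm \<longleftrightarrow> finite X \<and> finite G \<and>
     (\<forall>x\<in>X. inB G (om x)) \<and> (\<forall>a. \<forall>x\<in>X. inT X G (tm a x))"

text \<open>Generalized powerset construction: the determinised coalgebra on TX.
  Output component: a^m (T o^m p);  transition component: Kleisli extension of t^m(a,-).\<close>
definition det_out :: "('x \<Rightarrow> 'g list \<Rightarrow> bool) \<Rightarrow> ('g list \<Rightarrow> 'x \<times> 'g list) \<Rightarrow> 'g list \<Rightarrow> bool" where
  "det_out om p = (\<lambda>s. om (fst (p s)) (snd (p s)))"

definition det_step :: "('a \<Rightarrow> 'x \<Rightarrow> 'g list \<Rightarrow> 'x \<times> 'g list) \<Rightarrow> 'a
     \<Rightarrow> ('g list \<Rightarrow> 'x \<times> 'g list) \<Rightarrow> ('g list \<Rightarrow> 'x \<times> 'g list)" where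
  "det_step tm a p = (\<lambda>s. tm a (fst (p s)) (snd (p s)))"

fun det_deriv :: "('a \<Rightarrow> 'x \<Rightarrow> 'g list \<Rightarrow> 'x \<times> 'g list) \<Rightarrow> 'a list
     \<Rightarrow> ('g list \<Rightarrow> 'x \<times> 'g list) \<Rightarrow> ('g list \<Rightarrow> 'x \<times> 'g list)" where
  "det_deriv tm [] p = p"
| "det_deriv tm (a # w) p = det_deriv tm w (det_step tm a p)"

definition trace_sem :: "('x \<Rightarrow> 'g list \<Rightarrow> bool) \<Rightarrow> ('a \<Rightarrow> 'x \<Rightarrow> 'g list \<Rightarrow> 'x \<times> 'g list)
     \<Rightarrow> 'x \<Rightarrow> 'a list \<Rightarrow> 'g list \<Rightarrow> bool" where
  "trace_sem om tm x w = det_out om (det_deriv tm w (\<lambda>s. (x, s)))"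

fun dpda_step :: "('q \<Rightarrow> 'a \<Rightarrow> 'd \<Rightarrow> ('q \<times> 'd list) option) \<Rightarrow> 'a
     \<Rightarrow> ('q \<times> 'd list) \<Rightarrow> ('q \<times> 'd list) option" where
  "dpda_step \<delta> a (q, []) = None"
| "dpda_step \<delta> a (q, z # s) = (case \<delta> q a z of None \<Rightarrow> None | Some (q', u) \<Rightarrow> Some (q', u @ s))"

fun dpda_run :: "('q \<Rightarrow> 'a \<Rightarrow> 'd \<Rightarrow> ('q \<times> 'd list) option) \<Rightarrow> 'a list
     \<Rightarrow> ('q \<times> 'd list) \<Rightarrow> ('q \<times> 'd list) option" where
  "dpda_run \<delta> [] c = Some c"
| "dpda_run \<delta> (a # w) c = (case dpda_step \<delta> a c of None \<Rightarrow> None | Some c' \<Rightarrow> dpda_run \<delta> w c')"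

definition dpda_lang :: "('q \<Rightarrow> 'a \<Rightarrow> 'd \<Rightarrow> ('q \<times> 'd list) option) \<Rightarrow> 'q \<Rightarrow> 'd \<Rightarrow> 'q set
     \<Rightarrow> 'a list set" where
  "dpda_lang \<delta> q0 z0 F = {w. case dpda_run \<delta> w (q0, [z0]) of None \<Rightarrow> False | Some (q, _) \<Rightarrow> q \<in> F}"

text \<open>Real-time DCFL: accepted by a real-time DPDA with finite state set Q and finite stack
  alphabet D (carriers taken inside nat, which is no loss of generality).\<close>
definition rt_dcfl :: "'a list set \<Rightarrow> bool" where
  "rt_dcfl L \<longleftrightarrow> (\<exists>(Q::nat set) (D::nat set) \<delta> q0 z0 F.
      finite Q \<and> finite D \<and> q0 \<in> Q \<and> z0 \<in> D \<and> F \<subseteq> Q \<and>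
      (\<forall>q\<in>Q. \<forall>a. \<forall>z\<in>D. case \<delta> q a z of None \<Rightarrow> True
                                     | Some (q', u) \<Rightarrow> q' \<in> Q \<and> set u \<subseteq> D) \<and>
      L = dpda_lang \<delta> q0 z0 F)"

end

theory Submission
  imports Defs
begin

text \<open>Each transition of a stack automaton reads and rewrites only the top \<open>k\<close> stack symbols, and
  each output predicate only depends on them; finiteness of the states and of the input alphabet gives
  one bound \<open>K\<close> for all of them. A real-time DPDA can therefore simulate the automaton by keeping
  fewer than \<open>2 * K\<close> top symbols in its finite control and the rest of the stack as blocks of \<open>K\<close>
  to \<open>2 * K - 1\<close> symbols, one block per pushdown symbol: a step applies the transition to the
  buffer followed by the topmost block and cuts the result into blocks again. Conversely, a
  real-time DPDA is a stack automaton whose transitions read only the top symbol, with an extra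
  rejecting sink state for blocked runs.\<close>

fun stack_run :: "('a \<Rightarrow> 'x \<Rightarrow> 'g list \<Rightarrow> 'x \<times> 'g list) \<Rightarrow> 'a list \<Rightarrow> 'x \<times> 'g list \<Rightarrow> 'x \<times> 'g list" where
  "stack_run tm [] c = c"
| "stack_run tm (a # w) c = stack_run tm w (tm a (fst c) (snd c))"

lemma det_deriv_eq_stack_run: "det_deriv tm w p s = stack_run tm w (p s)"
  by (induction w arbitrary: p) (auto simp: det_step_def)

lemma trace_sem_eq_stack_run: "trace_sem om tm x w s = case_prod om (stack_run tm w (x, s))"
  by (simp add: trace_sem_def det_out_def det_deriv_eq_stack_run split_beta)

definition dpda_closed :: "'q set \<Rightarrow> 'd set \<Rightarrow> ('q \<Rightarrow> 'a \<Rightarrow> 'd \<Rightarrow> ('q \<times> 'd list) option) \<Rightarrow> bool" where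
  "dpda_closed Q D \<delta> \<longleftrightarrow>
     (\<forall>q\<in>Q. \<forall>a. \<forall>z\<in>D. \<forall>q' u. \<delta> q a z = Some (q', u) \<longrightarrow> q' \<in> Q \<and> set u \<subseteq> D)"

lemma dpda_closed_iff_case:
  "dpda_closed Q D \<delta> \<longleftrightarrow> (\<forall>q\<in>Q. \<forall>a. \<forall>z\<in>D.
     case \<delta> q a z of None \<Rightarrow> True | Some (q', u) \<Rightarrow> q' \<in> Q \<and> set u \<subseteq> D)"
  by (auto simp: dpda_closed_def split: option.splits)

lemma dpda_closedD:
  "dpda_closed Q D \<delta> \<Longrightarrow> q \<in> Q \<Longrightarrow> z \<in> D \<Longrightarrow> \<delta> q a z = Some (q', u) \<Longrightarrow> q' \<in> Q \<and> set u \<subseteq> D"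
  by (auto simp: dpda_closed_def)

lemma rt_dcfl_iff:
  "rt_dcfl (L :: 'a list set) \<longleftrightarrow> (\<exists>(Q::nat set) (D::nat set) \<delta> q0 z0 F.
     finite Q \<and> finite D \<and> q0 \<in> Q \<and> z0 \<in> D \<and> F \<subseteq> Q \<and> dpda_closed Q D \<delta> \<and>
     L = dpda_lang \<delta> q0 z0 F)"
  unfolding rt_dcfl_def dpda_closed_iff_case ..

lemma dpda_run_closed:
  assumes "dpda_closed Q D \<delta>" "q \<in> Q" "set s \<subseteq> D" "dpda_run \<delta> w (q, s) = Some (q', s')"
  shows "q' \<in> Q \<and> set s' \<subseteq> D"
  using assms(2-)
proof (induction w arbitrary: q s)
  case (Cons a w)
  then obtain z s0 q1 u where s: "s = z # s0" and \<delta>: "\<delta> q a z = Some (q1, u)"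
    and run: "dpda_run \<delta> w (q1, u @ s0) = Some (q', s')"
    by (cases s) (auto split: option.splits)
  with Cons.prems have "z \<in> D" "set s0 \<subseteq> D" by auto
  with dpda_closedD[OF assms(1) Cons.prems(1) _ \<delta>] have "q1 \<in> Q" "set (u @ s0) \<subseteq> D" by auto
  from Cons.IH[OF this run] show ?case .
qed simp

definition dpda_rename :: "('q \<Rightarrow> 'p) \<Rightarrow> ('d \<Rightarrow> 'e) \<Rightarrow> 'q set \<Rightarrow> 'd set
     \<Rightarrow> ('q \<Rightarrow> 'a \<Rightarrow> 'd \<Rightarrow> ('q \<times> 'd list) option) \<Rightarrow> 'p \<Rightarrow> 'a \<Rightarrow> 'e \<Rightarrow> ('p \<times> 'e list) option" where
  "dpda_rename f g Q D \<delta> i a j =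
     map_option (\<lambda>(q', u). (f q', map g u)) (\<delta> (inv_into Q f i) a (inv_into D g j))"

lemma dpda_run_rename:
  assumes "inj_on f Q" "inj_on g D" "dpda_closed Q D \<delta>" "q \<in> Q" "set s \<subseteq> D"
  shows "dpda_run (dpda_rename f g Q D \<delta>) w (f q, map g s) =
         map_option (\<lambda>(q', s'). (f q', map g s')) (dpda_run \<delta> w (q, s))"
  using assms(4,5)
proof (induction w arbitrary: q s)
  case (Cons a w)
  show ?case
  proof (cases s)
    case s: (Cons z s0)
    with Cons.prems have z: "z \<in> D" "set s0 \<subseteq> D" by auto
    have inv: "inv_into Q f (f q) = q" "inv_into D g (g z) = z"
      using assms(1,2) Cons.prems z by (auto simp: inv_into_f_f)
    show ?thesis
    proof (cases "\<delta> q a z")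
      case (Some r)
      obtain q1 u where r: "r = (q1, u)" by (cases r)
      with Some dpda_closedD[OF assms(3) Cons.prems(1) z(1)] have "q1 \<in> Q" "set (u @ s0) \<subseteq> D"
        using z by auto
      from Cons.IH[OF this] show ?thesis
        using Some r inv s by (simp add: dpda_rename_def)
    qed (use inv s in \<open>simp add: dpda_rename_def\<close>)
  qed simp
qed simp

lemma dpda_closed_rename:
  assumes "inj_on f Q" "inj_on g D" "dpda_closed Q D \<delta>"
  shows "dpda_closed (f ` Q) (g ` D) (dpda_rename f g Q D \<delta>)"
  unfolding dpda_closed_def
proof (intro ballI allI impI)
  fix i a j p v
  assume "i \<in> f ` Q" "j \<in> g ` D" and step: "dpda_rename f g Q D \<delta> i a j = Some (p, v)"
  then obtain q z where qz: "q \<in> Q" "z \<in> D" "i = f q" "j = g z" by blast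
  with step assms(1,2) obtain q' u where \<delta>: "\<delta> q a z = Some (q', u)" and "p = f q'" "v = map g u"
    by (auto simp: dpda_rename_def inv_into_f_f)
  moreover have "q' \<in> Q" "set u \<subseteq> D" using dpda_closedD[OF assms(3) qz(1,2) \<delta>] by auto
  ultimately show "p \<in> f ` Q \<and> set v \<subseteq> g ` D" by auto
qed

lemma rt_dcfl_dpda_lang:
  fixes Q :: "'q set" and D :: "'d set"
  assumes "finite Q" "finite D" "q0 \<in> Q" "z0 \<in> D" "F \<subseteq> Q" "dpda_closed Q D \<delta>"
  shows "rt_dcfl (dpda_lang \<delta> q0 z0 F)"
proof -
  obtain f :: "'q \<Rightarrow> nat" where f: "inj_on f Q"
    using finite_imp_inj_to_nat_seg[OF assms(1)] by blast
  obtain g :: "'d \<Rightarrow> nat" where g: "inj_on g D"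
    using finite_imp_inj_to_nat_seg[OF assms(2)] by blast
  let ?\<delta> = "dpda_rename f g Q D \<delta>"
  have lang: "dpda_lang \<delta> q0 z0 F = dpda_lang ?\<delta> (f q0) (g z0) (f ` F)"
  proof -
    have "(case dpda_run \<delta> w (q0, [z0]) of None \<Rightarrow> False | Some (q, _) \<Rightarrow> q \<in> F) =
          (case dpda_run ?\<delta> w (f q0, [g z0]) of None \<Rightarrow> False | Some (q, _) \<Rightarrow> q \<in> f ` F)" for w
      using dpda_run_rename[OF f g assms(6), of q0 "[z0]" w] assms(3-6)
        dpda_run_closed[OF assms(6), of q0 "[z0]" w] inj_on_image_mem_iff[OF f]
      by (auto split: option.splits)
    then show ?thesis by (simp add: dpda_lang_def)
  qed
  show ?thesis
    unfolding rt_dcfl_iff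
    by (intro exI[of _ "f ` Q"] exI[of _ "g ` D"] exI[of _ ?\<delta>] exI[of _ "f q0"] exI[of _ "g z0"]
        exI[of _ "f ` F"] conjI)
      (simp_all add: assms lang dpda_closed_rename[OF f g assms(6)] image_mono)
qed

section \<open>Real-time DPDAs as stack automata\<close>

text \<open>State \<open>Suc q\<close> simulates the DPDA state \<open>q\<close>; state \<open>0\<close> is a rejecting sink entered when the
  DPDA blocks.\<close>
fun dpda_stack_step :: "(nat \<Rightarrow> 'a \<Rightarrow> 'd \<Rightarrow> (nat \<times> 'd list) option) \<Rightarrow> 'a \<Rightarrow> nat \<Rightarrow> 'd list
     \<Rightarrow> nat \<times> 'd list" where
  "dpda_stack_step \<delta> a (Suc q) (z # s) =
     (case \<delta> q a z of None \<Rightarrow> (0, z # s) | Some (q', u) \<Rightarrow> (Suc q', u @ s))"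
| "dpda_stack_step \<delta> a n s = (0, s)"

definition final_out :: "nat set \<Rightarrow> nat \<Rightarrow> 'd list \<Rightarrow> bool" where
  "final_out F n s \<longleftrightarrow> (case n of 0 \<Rightarrow> False | Suc q \<Rightarrow> q \<in> F)"

lemma fst_stack_run_sink: "fst (stack_run (dpda_stack_step \<delta>) w (0, s)) = 0"
  by (induction w arbitrary: s) simp_all

lemma fst_stack_run_dpda_stack_step:
  "fst (stack_run (dpda_stack_step \<delta>) w (Suc q, s)) =
     (case dpda_run \<delta> w (q, s) of None \<Rightarrow> 0 | Some (q', _) \<Rightarrow> Suc q')"
proof (induction w arbitrary: q s)
  case (Cons a w)
  show ?case
    by (cases s; cases "\<delta> q a (hd s)")
       (auto simp: fst_stack_run_sink Cons.IH)
qed simp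

lemma trace_sem_dpda_stack_step:
  "trace_sem (final_out F) (dpda_stack_step \<delta>) (Suc q0) w [z0] \<longleftrightarrow> w \<in> dpda_lang \<delta> q0 z0 F"
  by (auto simp: trace_sem_eq_stack_run dpda_lang_def final_out_def split_beta
      fst_stack_run_dpda_stack_step split: option.splits)

lemma dpda_stack_step_closed:
  "dpda_closed Q D \<delta> \<Longrightarrow> x \<in> insert 0 (Suc ` Q) \<Longrightarrow> set s \<subseteq> D \<Longrightarrow>
     fst (dpda_stack_step \<delta> a x s) \<in> insert 0 (Suc ` Q) \<and> set (snd (dpda_stack_step \<delta> a x s)) \<subseteq> D"
proof (induction \<delta> a x s rule: dpda_stack_step.induct)
  case (1 \<delta> a q z s)
  then show ?case using dpda_closedD[of Q D \<delta> q z a] by (auto split: option.splits)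
qed auto

lemma inT_dpda_stack_step:
  fixes \<delta> :: "nat \<Rightarrow> 'a \<Rightarrow> 'd \<Rightarrow> (nat \<times> 'd list) option"
  assumes "dpda_closed Q D \<delta>" "x \<in> insert 0 (Suc ` Q)"
  shows "inT (insert 0 (Suc ` Q)) D (dpda_stack_step \<delta> a x)"
  unfolding inT_def
proof (intro conjI ballI exI[of _ 1] impI)
  fix s assume "s \<in> lists D"
  then show "fst (dpda_stack_step \<delta> a x s) \<in> insert 0 (Suc ` Q)"
    and "snd (dpda_stack_step \<delta> a x s) \<in> lists D"
    using dpda_stack_step_closed[OF assms, of s a] by auto
next
  fix w u :: "'d list" assume "length w = 1"
  then obtain z where "w = [z]" by (cases w) auto
  then have "dpda_stack_step \<delta> a x (w @ u) =
      (fst (dpda_stack_step \<delta> a x w), snd (dpda_stack_step \<delta> a x w) @ u)"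
    by (cases x) (auto split: option.splits)
  then show "fst (dpda_stack_step \<delta> a x (w @ u)) = fst (dpda_stack_step \<delta> a x w)"
    and "snd (dpda_stack_step \<delta> a x (w @ u)) = snd (dpda_stack_step \<delta> a x w) @ u"
    by simp_all
qed

lemma stack_aut_dpda_stack_step:
  assumes "finite Q" "finite D" "dpda_closed Q D \<delta>"
  shows "stack_aut (insert 0 (Suc ` Q)) D (final_out F) (dpda_stack_step \<delta>)"
  using assms inT_dpda_stack_step[OF assms(3)]
  by (auto simp: stack_aut_def inB_def final_out_def)

lemma rt_dcfl_imp_stack_aut:
  assumes "rt_dcfl L"
  shows "\<exists>(X::nat set) (G::nat set) om tm x0 \<gamma>0.
           stack_aut X G om tm \<and> x0 \<in> X \<and> \<gamma>0 \<in> G \<and> L = {w. trace_sem om tm x0 w [\<gamma>0]}"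
proof -
  obtain Q D :: "nat set" and \<delta> q0 z0 F where "finite Q" "finite D" "q0 \<in> Q" "z0 \<in> D"
    "dpda_closed Q D \<delta>" and L: "L = dpda_lang \<delta> q0 z0 F"
    using assms unfolding rt_dcfl_iff by blast
  moreover have "L = {w. trace_sem (final_out F) (dpda_stack_step \<delta>) (Suc q0) w [z0]}"
    by (simp add: L trace_sem_dpda_stack_step)
  ultimately show ?thesis
    by (intro exI[of _ "insert 0 (Suc ` Q)"] exI[of _ D] exI[of _ "final_out F"]
        exI[of _ "dpda_stack_step \<delta>"] exI[of _ "Suc q0"] exI[of _ z0])
      (simp add: stack_aut_dpda_stack_step)
qed

section \<open>Stack automata as real-time DPDAs\<close>

fun chunks :: "nat \<Rightarrow> 'a list \<Rightarrow> 'a list list" where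
  "chunks K v = (if K = 0 \<or> length v < 2 * K then [v] else take K v # chunks K (drop K v))"

declare chunks.simps [simp del]

lemma concat_chunks [simp]: "concat (chunks K v) = v"
  by (induction K v rule: chunks.induct) (subst chunks.simps, simp)

lemma chunks_not_Nil [simp]: "chunks K v \<noteq> []"
  by (subst chunks.simps) simp

lemma hd_chunks: "hd (chunks K v) = (if K = 0 \<or> length v < 2 * K then v else take K v)"
  by (subst chunks.simps) simp

lemma tl_chunks: "tl (chunks K v) = (if K = 0 \<or> length v < 2 * K then [] else chunks K (drop K v))"
  by (subst chunks.simps) simp

lemma set_chunks_subset: "c \<in> set (chunks K v) \<Longrightarrow> set c \<subseteq> set v"
  using concat_chunks[of K v] by (metis UN_upper set_concat)

lemma length_chunks_less: "0 < K \<Longrightarrow> c \<in> set (chunks K v) \<Longrightarrow> length c < 2 * K"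
  by (induction K v rule: chunks.induct) (subst (asm) chunks.simps, auto split: if_splits)

lemma length_chunks_ge: "K \<le> length v \<Longrightarrow> c \<in> set (chunks K v) \<Longrightarrow> K \<le> length c"
  by (induction K v rule: chunks.induct) (subst (asm) chunks.simps, auto split: if_splits)

lemma length_tl_chunks_ge: "c \<in> set (tl (chunks K v)) \<Longrightarrow> K \<le> length c"
  using length_chunks_ge[of K "drop K v" c] by (auto simp: tl_chunks split: if_splits)

lemma length_hd_chunks: "tl (chunks K v) \<noteq> [] \<Longrightarrow> length (hd (chunks K v)) = K"
  by (auto simp: hd_chunks tl_chunks split: if_splits)

lemma hd_chunks_append_concat_tl: "hd (chunks K v) @ concat (tl (chunks K v)) = v"
  using concat_chunks[of K v] chunks_not_Nil[of K v] by (cases "chunks K v") simp_all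

lemma inT_closed: "inT X G p \<Longrightarrow> s \<in> lists G \<Longrightarrow> p s \<in> X \<times> lists G"
  by (simp add: inT_def mem_Times_iff)

lemma inT_eventually_local:
  assumes "inT X G p"
  shows "\<forall>\<^sub>F k in sequentially. \<forall>w\<in>lists G. \<forall>u\<in>lists G. k \<le> length w \<longrightarrow>
           p (w @ u) = (fst (p w), snd (p w) @ u)"
proof -
  obtain k where k: "\<forall>w\<in>lists G. \<forall>u\<in>lists G. length w = k \<longrightarrow>
      fst (p (w @ u)) = fst (p w) \<and> snd (p (w @ u)) = snd (p w) @ u"
    using assms by (auto simp: inT_def)
  then have shift: "p (w' @ u) = (fst (p w'), snd (p w') @ u)"
    if "w' \<in> lists G" "u \<in> lists G" "length w' = k" for w' u
    using that by (simp add: prod_eq_iff)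
  have "p (w @ u) = (fst (p w), snd (p w) @ u)" if "w \<in> lists G" "u \<in> lists G" "k \<le> length w" for w u
  proof -
    have tk: "take k w \<in> lists G" "length (take k w) = k" and dk: "drop k w \<in> lists G"
      using that by (auto dest: in_set_takeD in_set_dropD)
    have pw: "p w = (fst (p (take k w)), snd (p (take k w)) @ drop k w)"
      using shift[OF tk(1) dk tk(2)] by simp
    have "p (w @ u) = p (take k w @ (drop k w @ u))"
      by (simp only: append_assoc[symmetric] append_take_drop_id)
    also have "\<dots> = (fst (p (take k w)), snd (p (take k w)) @ drop k w @ u)"
      using shift tk dk that(2) by simp
    also have "\<dots> = (fst (p w), snd (p w) @ u)"
      by (simp add: pw)
    finally show ?thesis .
  qed
  then show ?thesis
    unfolding eventually_sequentially by (intro exI[of _ k]) simp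
qed

lemma inB_eventually_local:
  assumes "inB G p"
  shows "\<forall>\<^sub>F k in sequentially. \<forall>w\<in>lists G. \<forall>u\<in>lists G. k \<le> length w \<longrightarrow> p (w @ u) = p w"
proof -
  obtain k where "\<forall>w\<in>lists G. \<forall>u\<in>lists G. k \<le> length w \<longrightarrow> p (w @ u) = p w"
    using assms by (auto simp: inB_def)
  then show ?thesis
    unfolding eventually_sequentially by (intro exI[of _ k]) simp
qed

locale uniform_stack_aut =
  fixes X :: "'x set" and G :: "'g set" and om :: "'x \<Rightarrow> 'g list \<Rightarrow> bool"
    and tm :: "'a \<Rightarrow> 'x \<Rightarrow> 'g list \<Rightarrow> 'x \<times> 'g list" and K :: nat
  assumes finite_states: "finite X" and finite_stack_alphabet: "finite G" and K_pos: "0 < K"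
    and tm_closed: "x \<in> X \<Longrightarrow> s \<in> lists G \<Longrightarrow> tm a x s \<in> X \<times> lists G"
    and tm_local: "x \<in> X \<Longrightarrow> w \<in> lists G \<Longrightarrow> u \<in> lists G \<Longrightarrow> K \<le> length w \<Longrightarrow>
                   tm a x (w @ u) = (fst (tm a x w), snd (tm a x w) @ u)"
    and om_local: "x \<in> X \<Longrightarrow> w \<in> lists G \<Longrightarrow> u \<in> lists G \<Longrightarrow> K \<le> length w \<Longrightarrow>
                   om x (w @ u) = om x w"

text \<open>Finiteness of the input alphabet is what makes the locality bounds of the transitions uniform.\<close>
lemma stack_aut_uniform:
  fixes tm :: "'a::finite \<Rightarrow> 'x \<Rightarrow> 'g list \<Rightarrow> 'x \<times> 'g list"
  assumes "stack_aut X G om tm"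
  obtains K where "uniform_stack_aut X G om tm K"
proof -
  have fin: "finite X" "finite G" and B: "\<And>x. x \<in> X \<Longrightarrow> inB G (om x)"
    and T: "\<And>a x. x \<in> X \<Longrightarrow> inT X G (tm a x)"
    using assms by (auto simp: stack_aut_def)
  have "\<forall>\<^sub>F k in sequentially. \<forall>a. \<forall>x\<in>X. \<forall>w\<in>lists G. \<forall>u\<in>lists G. k \<le> length w \<longrightarrow>
      tm a x (w @ u) = (fst (tm a x w), snd (tm a x w) @ u)"
    by (rule eventually_all_finite, rule eventually_ball_finite[OF fin(1)], rule ballI,
        rule inT_eventually_local, rule T)
  moreover have "\<forall>\<^sub>F k in sequentially. \<forall>x\<in>X. \<forall>w\<in>lists G. \<forall>u\<in>lists G. k \<le> length w \<longrightarrow>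
      om x (w @ u) = om x w"
    by (rule eventually_ball_finite[OF fin(1)], rule ballI, rule inB_eventually_local, rule B)
  ultimately have "\<forall>\<^sub>F k in sequentially. 0 < k \<and>
      (\<forall>a. \<forall>x\<in>X. \<forall>w\<in>lists G. \<forall>u\<in>lists G. k \<le> length w \<longrightarrow>
         tm a x (w @ u) = (fst (tm a x w), snd (tm a x w) @ u)) \<and>
      (\<forall>x\<in>X. \<forall>w\<in>lists G. \<forall>u\<in>lists G. k \<le> length w \<longrightarrow> om x (w @ u) = om x w)"
    by (intro eventually_conj eventually_gt_at_top)
  from eventually_happens'[OF sequentially_bot this] obtain K where K: "0 < K \<and>
      (\<forall>a. \<forall>x\<in>X. \<forall>w\<in>lists G. \<forall>u\<in>lists G. K \<le> length w \<longrightarrow>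
         tm a x (w @ u) = (fst (tm a x w), snd (tm a x w) @ u)) \<and>
      (\<forall>x\<in>X. \<forall>w\<in>lists G. \<forall>u\<in>lists G. K \<le> length w \<longrightarrow> om x (w @ u) = om x w)" ..
  have "uniform_stack_aut X G om tm K"
  proof
    show "finite X" "finite G" "0 < K" using fin K by simp_all
  next
    show "tm a x s \<in> X \<times> lists G" if "x \<in> X" "s \<in> lists G" for a x s
      using that by (rule inT_closed[OF T])
  next
    show "tm a x (w @ u) = (fst (tm a x w), snd (tm a x w) @ u)"
      if "x \<in> X" "w \<in> lists G" "u \<in> lists G" "K \<le> length w" for a x w u
      using that by (rule K[THEN conjunct2, THEN conjunct1, rule_format])
  next
    show "om x (w @ u) = om x w" if "x \<in> X" "w \<in> lists G" "u \<in> lists G" "K \<le> length w" for x w u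
      using that by (rule K[THEN conjunct2, THEN conjunct2, rule_format])
  qed
  then show ?thesis by (rule that)
qed

context uniform_stack_aut
begin

lemma length_snd_tm_ge:
  assumes "x \<in> X" "w \<in> lists G" "K \<le> length w"
  shows "length w - K \<le> length (snd (tm a x w))"
proof -
  have "tm a x w = tm a x (take K w @ drop K w)" by simp
  also have "\<dots> = (fst (tm a x (take K w)), snd (tm a x (take K w)) @ drop K w)"
    using assms by (intro tm_local) (auto dest: in_set_takeD in_set_dropD)
  finally show ?thesis by simp
qed

definition buffer_dpda :: "'x \<times> 'g list \<Rightarrow> 'a \<Rightarrow> 'g list option
     \<Rightarrow> (('x \<times> 'g list) \<times> 'g list option list) option" where
  "buffer_dpda q a z =
     (let p = tm a (fst q) (snd q @ (case z of None \<Rightarrow> [] | Some c \<Rightarrow> c)); cs = chunks K (snd p)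
      in Some ((fst p, hd cs), map Some (tl cs) @ (if z = None then [None] else [])))"

definition well_blocked :: "'x \<Rightarrow> 'g list \<Rightarrow> 'g list list \<Rightarrow> bool" where
  "well_blocked x b bs \<longleftrightarrow> x \<in> X \<and> b \<in> lists G \<and> length b < 2 * K \<and>
     (\<forall>c\<in>set bs. c \<in> lists G \<and> K \<le> length c \<and> length c < 2 * K) \<and> (bs \<noteq> [] \<longrightarrow> K \<le> length b)"

lemma chunks_in_lists_less:
  "v \<in> lists G \<Longrightarrow> c \<in> set (chunks K v) \<Longrightarrow> c \<in> lists G \<and> length c < 2 * K"
  using set_chunks_subset length_chunks_less[OF K_pos] by fastforce

lemma dpda_step_buffer_dpda:
  assumes "well_blocked x b bs"
  obtains x' b' bs' where
    "dpda_step buffer_dpda a ((x, b), map Some bs @ [None]) = Some ((x', b'), map Some bs' @ [None])"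
    "well_blocked x' b' bs'" "tm a x (b @ concat bs) = (x', b' @ concat bs')"
proof -
  define c0 where "c0 = (case bs of [] \<Rightarrow> [] | c # _ \<Rightarrow> c)"
  define p where "p = tm a x (b @ c0)"
  define cs where "cs = chunks K (snd p)"
  have wb: "x \<in> X" "b \<in> lists G" "\<forall>c\<in>set bs. c \<in> lists G \<and> K \<le> length c \<and> length c < 2 * K"
    "bs \<noteq> [] \<Longrightarrow> K \<le> length b"
    using assms by (auto simp: well_blocked_def)
  have concat_bs: "concat bs = c0 @ concat (tl bs)"
    by (cases bs) (simp_all add: c0_def)
  have c0: "c0 \<in> lists G" "bs \<noteq> [] \<Longrightarrow> K \<le> length c0"
    using wb(3) by (cases bs; simp add: c0_def)+
  have rest: "\<forall>c\<in>set (tl bs). c \<in> lists G \<and> K \<le> length c \<and> length c < 2 * K"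
    using wb(3) by (cases bs) simp_all
  have p: "fst p \<in> X" "snd p \<in> lists G"
    using tm_closed[OF wb(1), of "b @ c0" a] wb(2) c0(1) by (auto simp: p_def)
  have step: "dpda_step buffer_dpda a ((x, b), map Some bs @ [None]) =
      Some ((fst p, hd cs), map Some (tl cs @ tl bs) @ [None])"
    by (cases bs) (simp_all add: buffer_dpda_def p_def cs_def c0_def Let_def)
  have "tm a x (b @ concat bs) = (fst p, snd p @ concat (tl bs))"
  proof (cases "tl bs = []")
    case False
    then have "bs \<noteq> []" by auto
    have "concat (tl bs) \<in> lists G" using rest by (fastforce simp: in_lists_conv_set)
    with \<open>bs \<noteq> []\<close> show ?thesis
      using tm_local[OF wb(1), of "b @ c0" "concat (tl bs)" a] wb(2) c0 concat_bs by (simp add: p_def)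
  qed (simp add: concat_bs p_def)
  then have run: "tm a x (b @ concat bs) = (fst p, hd cs @ concat (tl cs @ tl bs))"
    by (simp add: cs_def hd_chunks_append_concat_tl)
  have "K \<le> length (hd cs)" if "tl cs @ tl bs \<noteq> []"
  proof (cases "tl cs = []")
    case True
    then have "bs \<noteq> []" "hd cs = snd p"
      using that hd_chunks_append_concat_tl[of K "snd p"] by (auto simp: cs_def)
    moreover have "length (b @ c0) - K \<le> length (snd p)"
      unfolding p_def using wb(1,2) c0 \<open>bs \<noteq> []\<close> by (intro length_snd_tm_ge) auto
    ultimately show ?thesis using wb(4) c0(2) by simp
  qed (simp add: cs_def length_hd_chunks)
  moreover have "c \<in> lists G \<and> K \<le> length c \<and> length c < 2 * K" if "c \<in> set (tl cs)" for c
    using that chunks_in_lists_less[OF p(2)] length_tl_chunks_ge[of c K "snd p"]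
      list.set_sel(2)[OF chunks_not_Nil] by (auto simp: cs_def)
  moreover have "hd cs \<in> lists G \<and> length (hd cs) < 2 * K"
    using chunks_in_lists_less[OF p(2)] hd_in_set[OF chunks_not_Nil] by (simp add: cs_def)
  ultimately have wb': "well_blocked (fst p) (hd cs) (tl cs @ tl bs)"
    using p(1) rest by (auto simp: well_blocked_def)
  show ?thesis by (rule that[OF step wb' run])
qed

lemma dpda_run_buffer_dpda:
  "well_blocked x b bs \<Longrightarrow> \<exists>x' b' bs'.
     dpda_run buffer_dpda w ((x, b), map Some bs @ [None]) = Some ((x', b'), map Some bs' @ [None]) \<and>
     well_blocked x' b' bs' \<and> stack_run tm w (x, b @ concat bs) = (x', b' @ concat bs')"
proof (induction w arbitrary: x b bs)
  case (Cons a w)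
  obtain x1 b1 bs1 where
    "dpda_step buffer_dpda a ((x, b), map Some bs @ [None]) = Some ((x1, b1), map Some bs1 @ [None])"
    "well_blocked x1 b1 bs1" "tm a x (b @ concat bs) = (x1, b1 @ concat bs1)"
    by (rule dpda_step_buffer_dpda[OF Cons.prems])
  with Cons.IH[of x1 b1 bs1] show ?case by simp
qed simp

definition buffer_words :: "'g list set" where
  "buffer_words = {b. set b \<subseteq> G \<and> length b \<le> 2 * K}"

definition buffer_states :: "('x \<times> 'g list) set" where
  "buffer_states = X \<times> buffer_words"

definition buffer_symbols :: "'g list option set" where
  "buffer_symbols = insert None (Some ` buffer_words)"

definition buffer_final :: "('x \<times> 'g list) set" where
  "buffer_final = {q \<in> buffer_states. om (fst q) (snd q)}"

lemma trace_lang_eq_buffer_dpda: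
  assumes "x0 \<in> X" "\<gamma>0 \<in> G"
  shows "{w. trace_sem om tm x0 w [\<gamma>0]} = dpda_lang buffer_dpda (x0, [\<gamma>0]) None buffer_final"
proof -
  have wb0: "well_blocked x0 [\<gamma>0] []" using assms K_pos by (simp add: well_blocked_def)
  have "trace_sem om tm x0 w [\<gamma>0] \<longleftrightarrow> w \<in> dpda_lang buffer_dpda (x0, [\<gamma>0]) None buffer_final" for w
  proof -
    obtain x' b' bs' where
      run: "dpda_run buffer_dpda w ((x0, [\<gamma>0]), [None]) = Some ((x', b'), map Some bs' @ [None])"
      and wb: "well_blocked x' b' bs'" and tr: "stack_run tm w (x0, [\<gamma>0]) = (x', b' @ concat bs')"
      using dpda_run_buffer_dpda[OF wb0, of w] by auto
    have "om x' (b' @ concat bs') = om x' b'"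
    proof (cases "bs' = []")
      case False
      with wb show ?thesis by (intro om_local) (auto simp: well_blocked_def in_lists_conv_set)
    qed simp
    moreover have "(x', b') \<in> buffer_states"
      using wb by (auto simp: well_blocked_def buffer_states_def buffer_words_def in_lists_conv_set)
    ultimately show ?thesis
      using run tr by (simp add: trace_sem_eq_stack_run dpda_lang_def buffer_final_def)
  qed
  then show ?thesis by auto
qed

lemma dpda_closed_buffer_dpda: "dpda_closed buffer_states buffer_symbols buffer_dpda"
  unfolding dpda_closed_def
proof (intro ballI allI impI)
  fix q a z q' u
  assume q: "q \<in> buffer_states" and z: "z \<in> buffer_symbols" and \<delta>: "buffer_dpda q a z = Some (q', u)"
  define v where "v = snd q @ (case z of None \<Rightarrow> [] | Some c \<Rightarrow> c)"
  define p where "p = tm a (fst q) v"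
  have "fst q \<in> X" "v \<in> lists G"
    using q z by (auto simp: v_def buffer_states_def buffer_symbols_def buffer_words_def split: option.splits)
  then have p: "fst p \<in> X" "snd p \<in> lists G"
    using tm_closed[of "fst q" v a] by (auto simp: p_def mem_Times_iff)
  have words: "c \<in> buffer_words" if "c \<in> set (chunks K (snd p))" for c
    using chunks_in_lists_less[OF p(2) that] by (auto simp: buffer_words_def in_lists_conv_set)
  have "q' = (fst p, hd (chunks K (snd p)))"
    "u = map Some (tl (chunks K (snd p))) @ (if z = None then [None] else [])"
    using \<delta> by (simp_all add: buffer_dpda_def p_def v_def Let_def)
  moreover have "hd (chunks K (snd p)) \<in> buffer_words" "set (tl (chunks K (snd p))) \<subseteq> buffer_words"
    using words hd_in_set[OF chunks_not_Nil] list.set_sel(2)[OF chunks_not_Nil] by auto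
  ultimately show "q' \<in> buffer_states \<and> set u \<subseteq> buffer_symbols"
    using p(1) by (auto simp: buffer_states_def buffer_symbols_def)
qed

lemma rt_dcfl_trace_lang:
  assumes "x0 \<in> X" "\<gamma>0 \<in> G"
  shows "rt_dcfl {w. trace_sem om tm x0 w [\<gamma>0]}"
proof -
  have "finite buffer_words"
    using finite_lists_length_le[OF finite_stack_alphabet] by (simp add: buffer_words_def)
  then have "finite buffer_states" "finite buffer_symbols"
    using finite_states by (simp_all add: buffer_states_def buffer_symbols_def)
  moreover have "(x0, [\<gamma>0]) \<in> buffer_states" "None \<in> buffer_symbols" "buffer_final \<subseteq> buffer_states"
    using assms K_pos by (auto simp: buffer_states_def buffer_symbols_def buffer_words_def buffer_final_def)
  ultimately show ?thesis
    unfolding trace_lang_eq_buffer_dpda[OF assms] by (rule rt_dcfl_dpda_lang[OF _ _ _ _ _ dpda_closed_buffer_dpda])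
qed

end

theorem mainTheorem5:
  shows "(\<forall>(X::'x set) (G::'g set) (om::'x \<Rightarrow> 'g list \<Rightarrow> bool)
             (tm::'a::finite \<Rightarrow> 'x \<Rightarrow> 'g list \<Rightarrow> 'x \<times> 'g list) x0 \<gamma>0.
            stack_aut X G om tm \<and> x0 \<in> X \<and> \<gamma>0 \<in> G \<longrightarrow>
            rt_dcfl {w. trace_sem om tm x0 w [\<gamma>0]})
       \<and> (\<forall>L::'a list set. rt_dcfl L \<longrightarrow>
            (\<exists>(X::nat set) (G::nat set) om tm x0 \<gamma>0.
               stack_aut X G om tm \<and> x0 \<in> X \<and> \<gamma>0 \<in> G \<and>
               L = {w. trace_sem om tm x0 w [\<gamma>0]}))"
proof (intro conjI allI impI)
  fix X :: "'x set" and G :: "'g set" and om and tm :: "'a \<Rightarrow> 'x \<Rightarrow> 'g list \<Rightarrow> 'x \<times> 'g list" and x0 \<gamma>0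
  assume sa: "stack_aut X G om tm \<and> x0 \<in> X \<and> \<gamma>0 \<in> G"
  then obtain K where "uniform_stack_aut X G om tm K"
    by (blast elim: stack_aut_uniform)
  with sa show "rt_dcfl {w. trace_sem om tm x0 w [\<gamma>0]}"
    by (simp add: uniform_stack_aut.rt_dcfl_trace_lang)
qed (rule rt_dcfl_imp_stack_aut)

end
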